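(* Let $\bar{X}=\{x_0<x_1<x_2<\cdots\}$ and let $\overline{\mathrm{WCQSym}}\subseteq \mathbf{k}[[\bar X]]_{\tilde{\mathbb N}}$ be the free $\mathbf{k}$-module with basis $\{\bar M_{(\alpha_0,\alpha_1,\dots,\alpha_k)}\}$ indexed by the nonempty $\tilde{\mathbb N}$-compositions $(\alpha_0,\alpha_1,\dots,\alpha_k)$, where $\bar M_{(\alpha_0,\alpha)}:=x_0^{\alpha_0}M_\alpha$ (equivalently $\overline{\mathrm{WCQSym}}=x_0^{\varepsilon}\mathbf{k}[x_0]\,\mathrm{WCQSym}$). It is a subalgebra, with product $\bar M_{(\alpha_0,\alpha)}\bar M_{(\beta_0,\beta)}=\bar M_{(\alpha_0+\beta_0,\alpha*\beta)}$ (extended linearly in the second slot, with $(\gamma_0,\emptyset)=(\gamma_0)$). Let $\bar P$ be the $\mathbf{k}$-linear operator on $\overline{\mathrm{WCQSym}}$ with $\bar P(\bar M_{(\alpha_0,\alpha)})=\bar M_{(\varepsilon,\alpha_0,\alpha)}$. Then $(\overline{\mathrm{WCQSym}},\bar P)$ is the free commutative unitary Rota--Baxter algebra of weight $1$ generated by $x_0=\bar M_{(1)}$: it is a commutative unitary Rota--Baxter algebra of weight $1$ (with identity $\bar M_{(\varepsilon)}=x_0^{\varepsilon}$), and for every commutative unitary Rota--Baxter $\mathbf{k}$-algebra $(R,P)$ of weight $1$ and every $r\in R$ there is a unique unital Rota--Baxter algebra homomorphism $(\overline{\mathrm{WCQSym}},\bar P)\to(R,P)$ sending $x_0$ to $r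$.
   Context: $\mathbf{k}$ is a commutative ring containing $\mathbb{Q}$. $\tilde{\mathbb N}=\mathbb N\cup\{\varepsilon\}$ is the commutative monoid extending the additive monoid $\mathbb N$ of nonnegative integers by a new element $\varepsilon$ with $0+\varepsilon=\varepsilon+0=\varepsilon+\varepsilon=\varepsilon$ and $n+\varepsilon=\varepsilon+n=n$ for all integers $n\ge1$. For a totally ordered countable set $Y$ of commuting variables, an $\tilde{\mathbb N}$-exponent monomial is a formal product $\prod_{y\in Y}y^{f(y)}$ with $f:Y\to\tilde{\mathbb N}$ of finite support ($y^0=1$); monomials multiply by adding exponents pointwise in $\tilde{\mathbb N}$, and $\mathbf{k}[[Y]]_{\tilde{\mathbb N}}$ is the algebra of possibly infinite $\mathbf{k}$-linear combinations of such monomials with the bilinearly extended product (well defined since each element of $\tilde{\mathbb N}$ is a sum of two elements in only finitely many ways). An $\tilde{\mathbb N}$-composition is a finite (possibly empty) sequence of elements of $\tilde{\mathbb N}\setminus\{0\}=\{\varepsilon,1,2,\dots\}$. For $X=\{x_1<x_2<\cdots\}$ and an $\tilde{\mathbb N}$-composition $\alpha=(\alpha_1,\dots,\alpha_k)$, $M_\alpha=\sum_{1\le i_1<\cdots<i_k}x_{i_1}^{\alpha_1}\cdots x_{i_k}^{\alpha_k}\in\mathbf{k}[[X]]_{\tilde{\mathbb N}}\subseteq \mathbf{k}[[\bar X]]_{\tilde{\mathbb N}}$, $M_\emptyset=1$; $\mathrm{WCQSym}$ is the $\mathbf{k}$-span of all $M_\alpha$. The quasi-shuffle product $*$ on the free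 $\mathbf{k}$-module on $\tilde{\mathbb N}$-compositions is the bilinear product with $\emptyset*\alpha=\alpha*\emptyset=\alpha$ and $(a,\alpha)*(b,\beta)=(a,\alpha*(b,\beta))+(b,(a,\alpha)*\beta)+(a+b,\alpha*\beta)$ for $a,b\in\tilde{\mathbb N}\setminus\{0\}$, where $(a,\cdot)$ (prepending $a$) is extended linearly. A Rota--Baxter algebra of weight $1$ is a commutative algebra $R$ with a $\mathbf{k}$-linear map $P:R\to R$ such that $P(x)P(y)=P(xP(y))+P(P(x)y)+P(xy)$ for all $x,y\in R$; morphisms are algebra homomorphisms commuting with the operators. *)

theory Defs
  imports "HOL-Library.Multiset"
begin

datatype ntil = Eps | N nat

fun nadd :: "ntil \<Rightarrow> ntil \<Rightarrow> ntil" where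
  "nadd Eps Eps = Eps"
| "nadd Eps (N n) = (if n = 0 then Eps else N n)"
| "nadd (N n) Eps = (if n = 0 then Eps else N n)"
| "nadd (N m) (N n) = N (m + n)"

definition is_comp :: "ntil list \<Rightarrow> bool" where
  "is_comp c \<longleftrightarrow> N 0 \<notin> set c"

definition is_ne_comp :: "ntil list \<Rightarrow> bool" where
  "is_ne_comp c \<longleftrightarrow> c \<noteq> [] \<and> is_comp c"

fun qsh :: "ntil list \<Rightarrow> ntil list \<Rightarrow> ntil list multiset" where
  "qsh [] b = {#b#}"
| "qsh (x # a) [] = {#x # a#}"
| "qsh (x # a) (y # b) =
     image_mset (Cons x) (qsh a (y # b)) + image_mset (Cons y) (qsh (x # a) b)
     + image_mset (Cons (nadd x y)) (qsh a b)"

fun barprod :: "ntil list \<Rightarrow> ntil list \<Rightarrow> ntil list multiset" where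
  "barprod (a0 # a) (b0 # b) = image_mset (Cons (nadd a0 b0)) (qsh a b)"
| "barprod _ _ = {#}"

text \<open>Elements are coefficient functions (composition \<Rightarrow> k) of finite support on
  nonempty compositions; the basis element Mbar_c is \<open>Mb c\<close>.\<close>

definition supp :: "(ntil list \<Rightarrow> 'k::zero) \<Rightarrow> ntil list set" where
  "supp f = {c. f c \<noteq> 0}"

definition WCQbar :: "(ntil list \<Rightarrow> 'k::comm_ring_1) set" where
  "WCQbar = {f. finite (supp f) \<and> (\<forall>c \<in> supp f. is_ne_comp c)}"

definition Mb :: "ntil list \<Rightarrow> ntil list \<Rightarrow> 'k::comm_ring_1" where
  "Mb c = (\<lambda>d. if d = c then 1 else 0)"

definition wadd :: "(ntil list \<Rightarrow> 'k::comm_ring_1) \<Rightarrow> (ntil list \<Rightarrow> 'k) \<Rightarrow> ntil list \<Rightarrow> 'k" where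
  "wadd f g = (\<lambda>c. f c + g c)"

definition wzero :: "ntil list \<Rightarrow> 'k::comm_ring_1" where
  "wzero = (\<lambda>c. 0)"

definition wsmult :: "'k::comm_ring_1 \<Rightarrow> (ntil list \<Rightarrow> 'k) \<Rightarrow> ntil list \<Rightarrow> 'k" where
  "wsmult a f = (\<lambda>c. a * f c)"

definition wmul :: "(ntil list \<Rightarrow> 'k::comm_ring_1) \<Rightarrow> (ntil list \<Rightarrow> 'k) \<Rightarrow> ntil list \<Rightarrow> 'k" where
  "wmul f g = (\<lambda>c. \<Sum>a\<in>supp f. \<Sum>b\<in>supp g. f a * g b * of_nat (count (barprod a b) c))"

definition wone :: "ntil list \<Rightarrow> 'k::comm_ring_1" where
  "wone = Mb [Eps]"

definition Pbar :: "(ntil list \<Rightarrow> 'k::comm_ring_1) \<Rightarrow> ntil list \<Rightarrow> 'k" where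
  "Pbar f = (\<lambda>c. \<Sum>a\<in>supp f. f a * Mb (Eps # a) c)"

definition x0 :: "ntil list \<Rightarrow> 'k::comm_ring_1" where
  "x0 = Mb [N 1]"

text \<open>(WCQbar, Pbar) is a commutative unitary k-algebra with a weight-1
  Rota--Baxter operator (additive group and module axioms are pointwise).\<close>
definition WCQbar_is_comm_RB_algebra :: "'k::comm_ring_1 itself \<Rightarrow> bool" where
  "WCQbar_is_comm_RB_algebra _ \<longleftrightarrow>
     (wzero :: ntil list \<Rightarrow> 'k) \<in> WCQbar \<and> (wone :: ntil list \<Rightarrow> 'k) \<in> WCQbar \<and>
     (\<forall>f\<in>(WCQbar :: (ntil list \<Rightarrow> 'k) set). \<forall>g\<in>WCQbar.
        wadd f g \<in> WCQbar \<and> wmul f g \<in> WCQbar) \<and>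
     (\<forall>a. \<forall>f\<in>(WCQbar :: (ntil list \<Rightarrow> 'k) set). wsmult a f \<in> WCQbar) \<and>
     (\<forall>f\<in>(WCQbar :: (ntil list \<Rightarrow> 'k) set). Pbar f \<in> WCQbar) \<and>
     (\<forall>f\<in>(WCQbar :: (ntil list \<Rightarrow> 'k) set). \<forall>g\<in>WCQbar. \<forall>h\<in>WCQbar.
        wmul (wmul f g) h = wmul f (wmul g h) \<and>
        wmul f (wadd g h) = wadd (wmul f g) (wmul f h)) \<and>
     (\<forall>f\<in>(WCQbar :: (ntil list \<Rightarrow> 'k) set). \<forall>g\<in>WCQbar.
        wmul f g = wmul g f) \<and>
     (\<forall>f\<in>(WCQbar :: (ntil list \<Rightarrow> 'k) set). wmul wone f = f) \<and>
     (\<forall>a. \<forall>f\<in>(WCQbar :: (ntil list \<Rightarrow> 'k) set). \<forall>g\<in>WCQbar.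
        wmul (wsmult a f) g = wsmult a (wmul f g)) \<and>
     (\<forall>f\<in>(WCQbar :: (ntil list \<Rightarrow> 'k) set). \<forall>g\<in>WCQbar.
        Pbar (wadd f g) = wadd (Pbar f) (Pbar g)) \<and>
     (\<forall>a. \<forall>f\<in>(WCQbar :: (ntil list \<Rightarrow> 'k) set). Pbar (wsmult a f) = wsmult a (Pbar f)) \<and>
     (\<forall>f\<in>(WCQbar :: (ntil list \<Rightarrow> 'k) set). \<forall>g\<in>WCQbar.
        wmul (Pbar f) (Pbar g) = wadd (wadd (Pbar (wmul f (Pbar g))) (Pbar (wmul (Pbar f) g))) (Pbar (wmul f g)))"

text \<open>A commutative unitary k-algebra R is a commutative ring (type class) together with
  a unital ring homomorphism phi : k \<rightarrow> R giving the scalar multiplication.\<close>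
definition is_k_algebra :: "('k::comm_ring_1 \<Rightarrow> 'r::comm_ring_1) \<Rightarrow> bool" where
  "is_k_algebra phi \<longleftrightarrow> phi 1 = 1 \<and> (\<forall>a b. phi (a + b) = phi a + phi b) \<and>
     (\<forall>a b. phi (a * b) = phi a * phi b)"

definition is_RB_operator :: "('k::comm_ring_1 \<Rightarrow> 'r::comm_ring_1) \<Rightarrow> ('r \<Rightarrow> 'r) \<Rightarrow> bool" where
  "is_RB_operator phi P \<longleftrightarrow>
     (\<forall>x y. P (x + y) = P x + P y) \<and> (\<forall>a x. P (phi a * x) = phi a * P x) \<and>
     (\<forall>x y. P x * P y = P (x * P y) + P (P x * y) + P (x * y))"

definition is_RB_hom :: "('k::comm_ring_1 \<Rightarrow> 'r::comm_ring_1) \<Rightarrow> ('r \<Rightarrow> 'r)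
    \<Rightarrow> ((ntil list \<Rightarrow> 'k) \<Rightarrow> 'r) \<Rightarrow> bool" where
  "is_RB_hom phi P h \<longleftrightarrow>
     h wone = 1 \<and>
     (\<forall>f\<in>WCQbar. \<forall>g\<in>WCQbar. h (wadd f g) = h f + h g \<and> h (wmul f g) = h f * h g) \<and>
     (\<forall>a. \<forall>f\<in>WCQbar. h (wsmult a f) = phi a * h f) \<and>
     (\<forall>f\<in>WCQbar. h (Pbar f) = P (h f))"

end

(*
  The product of WCQbar is the bilinear extension of a multiset-valued product on
  nonempty compositions, so the algebra axioms come down to commutativity and
  associativity of the quasi-shuffle, and the Rota-Baxter identity for Pbar is the
  first-letter recursion of the quasi-shuffle, qsh a b = a * (eps, b) + (eps, a) * b + a * b
  in terms of the basis product.

  Since Mbar(a0, a1, ..., ak) = x0^a0 * Pbar(Mbar(a1, ..., ak)), a homomorphism sending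
  x0 to r is forced on the basis to r^a0 P(r^a1 P(... P(r^ak))), which gives uniqueness.
  Conversely, the weight-1 Rota-Baxter identity in R says exactly that these words
  multiply according to the quasi-shuffle recursion, so their linear extension is a
  homomorphism. All structure constants are nonnegative integers.
*)
theory Submission
  imports Defs
begin

section \<open>The quasi-shuffle product\<close>

interpretation nadd: abel_semigroup nadd
proof
  show "nadd (nadd x y) z = nadd x (nadd y z)" for x y z
    by (cases x; cases y; cases z) auto
  show "nadd x y = nadd y x" for x y
    by (cases x; cases y) auto
qed

lemma nadd_eq_N0_iff: "nadd x y = N 0 \<longleftrightarrow> x = N 0 \<and> y = N 0"
  by (cases x; cases y) auto

lemma nadd_Eps_right: "x \<noteq> N 0 \<Longrightarrow> nadd x Eps = x"
  by (cases x) auto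

lemma nadd_Eps_left: "x \<noteq> N 0 \<Longrightarrow> nadd Eps x = x"
  by (cases x) auto

lemma qsh_Nil_right [simp]: "qsh a [] = {#a#}"
  by (cases a) auto

lemma qsh_commute: "qsh a b = qsh b a"
  by (induction a b rule: qsh.induct) (auto simp: nadd.commute ac_simps)

lemma is_comp_qsh: "c \<in># qsh a b \<Longrightarrow> is_comp a \<Longrightarrow> is_comp b \<Longrightarrow> is_comp c"
  by (induction a b arbitrary: c rule: qsh.induct)
    (auto simp: is_comp_def nadd_eq_N0_iff eq_commute[of "N 0"])

definition mset_bind :: "'a multiset \<Rightarrow> ('a \<Rightarrow> 'b multiset) \<Rightarrow> 'b multiset" where
  "mset_bind M F = \<Sum>\<^sub># (image_mset F M)"

lemma mset_bind_simps [simp]: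
  "mset_bind {#} F = {#}"
  "mset_bind (add_mset x M) F = F x + mset_bind M F"
  "mset_bind (M + M') F = mset_bind M F + mset_bind M' F"
  "mset_bind (image_mset g M) F = mset_bind M (\<lambda>x. F (g x))"
  by (simp_all add: mset_bind_def image_mset.compositionality o_def)

lemma mset_bind_single_right [simp]: "mset_bind M (\<lambda>x. {#x#}) = M"
  by (induction M) auto

lemma mset_bind_empty_right [simp]: "mset_bind M (\<lambda>x. {#}) = {#}"
  by (induction M) auto

lemma mset_bind_add_right: "mset_bind M (\<lambda>x. F x + G x) = mset_bind M F + mset_bind M G"
  by (induction M) auto

lemma mset_bind_image_right: "mset_bind M (\<lambda>x. image_mset f (F x)) = image_mset f (mset_bind M F)"
  by (induction M) auto

lemma count_mset_bind: "count (mset_bind M F) c = (\<Sum>x\<in>#M. count (F x) c)"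
  by (induction M) auto

text \<open>Expanding the first letters of \<open>(a * b) * c\<close> gives one term for each nonempty set of
  factors contributing to the first letter. The expansion is symmetric under reversing
  \<open>(a, b, c)\<close>, so the reversal identity follows by induction, and associativity from it by
  commutativity.\<close>

lemma mset_bind_qsh_Cons:
  "mset_bind (qsh (x # a) (y # b)) (\<lambda>v. qsh v (z # c)) =
     image_mset (Cons x) (mset_bind (qsh a (y # b)) (\<lambda>v. qsh v (z # c)))
   + image_mset (Cons y) (mset_bind (qsh (x # a) b) (\<lambda>v. qsh v (z # c)))
   + image_mset (Cons (nadd x y)) (mset_bind (qsh a b) (\<lambda>v. qsh v (z # c)))
   + image_mset (Cons z) (mset_bind (qsh (x # a) (y # b)) (\<lambda>v. qsh v c))
   + image_mset (Cons (nadd x z)) (mset_bind (qsh a (y # b)) (\<lambda>v. qsh v c))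
   + image_mset (Cons (nadd y z)) (mset_bind (qsh (x # a) b) (\<lambda>v. qsh v c))
   + image_mset (Cons (nadd (nadd x y) z)) (mset_bind (qsh a b) (\<lambda>v. qsh v c))"
  by (simp add: mset_bind_add_right mset_bind_image_right ac_simps)

lemma mset_bind_qsh_swap:
  "mset_bind (qsh a b) (\<lambda>v. qsh v c) = mset_bind (qsh c b) (\<lambda>v. qsh v a)"
proof (induction "length a + length b + length c" arbitrary: a b c rule: less_induct)
  case less
  show ?case
  proof (cases "a = [] \<or> b = [] \<or> c = []")
    case True
    then show ?thesis
      by (auto simp: qsh_commute)
  next
    case False
    then obtain x a' y b' z c' where abc: "a = x # a'" "b = y # b'" "c = z # c'"
      by (meson list.exhaust)
    show ?thesis
      unfolding abc mset_bind_qsh_Cons[of x a'] mset_bind_qsh_Cons[of z c']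
      using less[of a' "y # b'" "z # c'"] less[of "x # a'" b' "z # c'"]
        less[of a' b' "z # c'"] less[of "x # a'" "y # b'" c'] less[of a' "y # b'" c']
        less[of "x # a'" b' c'] less[of a' b' c']
      by (simp del: qsh.simps add: abc nadd.assoc nadd.commute nadd.left_commute ac_simps)
  qed
qed

lemma mset_bind_qsh_assoc: "mset_bind (qsh a b) (\<lambda>v. qsh v c) = mset_bind (qsh b c) (qsh a)"
  unfolding mset_bind_qsh_swap[of a] by (simp only: qsh_commute[of c b] qsh_commute[of _ a])

lemma barprod_commute: "barprod a b = barprod b a"
  by (cases a; cases b) (auto simp: qsh_commute nadd.commute)

lemma mset_bind_barprod_assoc:
  "mset_bind (barprod a b) (\<lambda>d. barprod d c) = mset_bind (barprod b c) (barprod a)"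
proof (cases "a = [] \<or> b = [] \<or> c = []")
  case False
  then obtain x a' y b' z c' where "a = x # a'" "b = y # b'" "c = z # c'"
    by (meson list.exhaust)
  then show ?thesis
    using mset_bind_qsh_assoc[of a' b' c'] by (simp add: mset_bind_image_right nadd.assoc)
next
  case True
  have "barprod [] = (\<lambda>_. {#})"
    by auto
  with True show ?thesis
    by auto
qed

lemma is_ne_comp_barprod: "c \<in># barprod a b \<Longrightarrow> is_comp a \<Longrightarrow> is_comp b \<Longrightarrow> is_ne_comp c"
  by (cases a; cases b)
    (auto simp: is_ne_comp_def is_comp_def nadd_eq_N0_iff eq_commute[of "N 0"]
      dest!: is_comp_qsh[unfolded is_comp_def])

lemma barprod_Eps_left: "is_ne_comp b \<Longrightarrow> barprod [Eps] b = {#b#}"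
  by (cases b) (auto simp: is_ne_comp_def is_comp_def nadd_Eps_left)

lemma qsh_eq_barprod_Eps:
  "is_ne_comp a \<Longrightarrow> is_ne_comp b \<Longrightarrow>
    qsh a b = barprod a (Eps # b) + barprod (Eps # a) b + barprod a b"
  by (cases a; cases b) (auto simp: is_ne_comp_def is_comp_def nadd_Eps_left nadd_Eps_right)

lemma sum_of_nat_count_mult:
  fixes F :: "'a \<Rightarrow> 'b::comm_semiring_1"
  assumes "finite D" "set_mset M \<subseteq> D"
  shows "(\<Sum>d\<in>D. of_nat (count M d) * F d) = (\<Sum>x\<in>#M. F x)"
  using assms(2)
proof (induction M)
  case (add x M)
  have "(\<Sum>d\<in>D. of_nat (count (add_mset x M) d) * F d)
      = (\<Sum>d\<in>D. of_nat (count M d) * F d) + (\<Sum>d\<in>D. if d = x then F d else 0)"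
    by (simp add: sum.distrib[symmetric]) (intro sum.cong, auto simp: distrib_right add.commute)
  with add assms(1) show ?case
    by (simp add: sum.delta add.commute)
qed simp

lemma sum_mset_sum_swap: "(\<Sum>x\<in>#M. \<Sum>e\<in>U. F x e) = (\<Sum>e\<in>U. \<Sum>x\<in>#M. F x e)"
  by (induction M) (simp_all add: sum.distrib)

lemma sum_sum_count_bilinear:
  fixes u v K :: "_ \<Rightarrow> 'b::comm_semiring_1"
  assumes "finite D" "\<And>a b. a \<in> S \<Longrightarrow> b \<in> T \<Longrightarrow> set_mset (m a b) \<subseteq> D"
  shows "(\<Sum>d\<in>D. (\<Sum>a\<in>S. \<Sum>b\<in>T. u a * v b * of_nat (count (m a b) d)) * K d)
    = (\<Sum>a\<in>S. \<Sum>b\<in>T. u a * v b * (\<Sum>x\<in>#m a b. K x))"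
proof -
  have "(\<Sum>d\<in>D. (\<Sum>a\<in>S. \<Sum>b\<in>T. u a * v b * of_nat (count (m a b) d)) * K d)
      = (\<Sum>d\<in>D. \<Sum>a\<in>S. \<Sum>b\<in>T. u a * v b * (of_nat (count (m a b) d) * K d))"
    by (simp add: sum_distrib_right mult.assoc)
  also have "\<dots> = (\<Sum>a\<in>S. \<Sum>b\<in>T. \<Sum>d\<in>D. u a * v b * (of_nat (count (m a b) d) * K d))"
    by (rule trans[OF sum.swap sum.cong[OF refl sum.swap]])
  also have "\<dots> = (\<Sum>a\<in>S. \<Sum>b\<in>T. u a * v b * (\<Sum>x\<in>#m a b. K x))"
    using assms by (simp add: sum_distrib_left[symmetric] sum_of_nat_count_mult)
  finally show ?thesis .
qed

section \<open>The algebra \<open>WCQbar\<close>\<close>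

lemma WCQbar_iff: "f \<in> WCQbar \<longleftrightarrow> finite (supp f) \<and> (\<forall>c. f c \<noteq> 0 \<longrightarrow> is_ne_comp c)"
  by (auto simp: WCQbar_def supp_def)

lemma finite_supp_WCQbar: "f \<in> WCQbar \<Longrightarrow> finite (supp f)"
  by (simp add: WCQbar_def)

lemma is_ne_comp_supp_WCQbar: "f \<in> WCQbar \<Longrightarrow> c \<in> supp f \<Longrightarrow> is_ne_comp c"
  by (simp add: WCQbar_def)

lemma WCQbar_supp_subset: "g \<in> WCQbar \<Longrightarrow> supp f \<subseteq> supp g \<Longrightarrow> f \<in> WCQbar"
  by (auto simp: WCQbar_def intro: finite_subset)

lemma supp_wadd_subset: "supp (wadd f g) \<subseteq> supp f \<union> supp g"
  by (auto simp: supp_def wadd_def)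

lemma supp_wsmult_subset: "supp (wsmult a f) \<subseteq> supp f"
  by (auto simp: supp_def wsmult_def)

lemma Mb_apply: "Mb c d = (if d = c then 1 else 0)"
  by (simp add: Mb_def)

lemma supp_Mb_subset: "supp (Mb c) \<subseteq> {c}"
  by (auto simp: supp_def Mb_def)

lemma finite_supp_Mb: "finite (supp (Mb c))"
  using supp_Mb_subset finite_subset by blast

lemma wzero_in_WCQbar: "wzero \<in> WCQbar"
  by (simp add: WCQbar_iff wzero_def supp_def)

lemma wadd_in_WCQbar: "f \<in> WCQbar \<Longrightarrow> g \<in> WCQbar \<Longrightarrow> wadd f g \<in> WCQbar"
  using supp_wadd_subset[of f g] by (auto simp: WCQbar_def intro: finite_subset)

lemma wsmult_in_WCQbar: "f \<in> WCQbar \<Longrightarrow> wsmult a f \<in> WCQbar"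
  by (rule WCQbar_supp_subset[OF _ supp_wsmult_subset])

lemma Mb_in_WCQbar: "is_ne_comp c \<Longrightarrow> Mb c \<in> WCQbar"
  using supp_Mb_subset[of c] by (auto simp: WCQbar_iff Mb_def intro: finite_subset)

lemma wone_in_WCQbar: "wone \<in> WCQbar"
  by (simp add: wone_def Mb_in_WCQbar is_ne_comp_def is_comp_def)

lemma Mb_single_in_WCQbar: "x \<noteq> N 0 \<Longrightarrow> Mb [x] \<in> WCQbar"
  by (simp add: Mb_in_WCQbar is_ne_comp_def is_comp_def)

lemma sum_supp_superset:
  assumes "finite S" "supp f \<subseteq> S" "\<And>a. f a = 0 \<Longrightarrow> H a = 0"
  shows "sum H (supp f) = sum H S"
  using assms by (intro sum.mono_neutral_left) (auto simp: supp_def)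

lemma wmul_eq_sum:
  assumes "finite S" "supp f \<subseteq> S" "finite T" "supp g \<subseteq> T"
  shows "wmul f g c = (\<Sum>a\<in>S. \<Sum>b\<in>T. f a * g b * of_nat (count (barprod a b) c))"
  unfolding wmul_def using assms
  by (simp add: sum_supp_superset[OF assms(1,2)] sum_supp_superset[OF assms(3,4)])

definition barprod_set :: "ntil list set \<Rightarrow> ntil list set \<Rightarrow> ntil list set" where
  "barprod_set S T = (\<Union>a\<in>S. \<Union>b\<in>T. set_mset (barprod a b))"

lemma finite_barprod_set: "finite S \<Longrightarrow> finite T \<Longrightarrow> finite (barprod_set S T)"
  by (simp add: barprod_set_def)

lemma set_mset_barprod_subset: "a \<in> S \<Longrightarrow> b \<in> T \<Longrightarrow> set_mset (barprod a b) \<subseteq> barprod_set S T"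
  by (auto simp: barprod_set_def)

lemma supp_wmul_subset: "supp (wmul f g) \<subseteq> barprod_set (supp f) (supp g)"
  by (force simp: supp_def wmul_def barprod_set_def not_in_iff intro: sum.neutral)

lemma wmul_in_WCQbar:
  assumes "f \<in> WCQbar" "g \<in> WCQbar"
  shows "wmul f g \<in> WCQbar"
proof -
  have "is_ne_comp c" if "c \<in> barprod_set (supp f) (supp g)" for c
  proof -
    from that obtain a b where "a \<in> supp f" "b \<in> supp g" "c \<in># barprod a b"
      by (auto simp: barprod_set_def)
    with assms show ?thesis
      by (intro is_ne_comp_barprod[of c a b]) (auto simp: WCQbar_def is_ne_comp_def)
  qed
  then show ?thesis
    using assms supp_wmul_subset[of f g]
    by (auto simp: WCQbar_def intro: finite_subset finite_barprod_set)
qed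

lemma wmul_wmul_left_eq:
  assumes "f \<in> WCQbar" "g \<in> WCQbar" "h \<in> WCQbar"
  shows "wmul (wmul f g) h c = (\<Sum>a\<in>supp f. \<Sum>b\<in>supp g. \<Sum>e\<in>supp h.
    f a * g b * h e * of_nat (count (mset_bind (barprod a b) (\<lambda>x. barprod x e)) c))"
proof -
  let ?D = "barprod_set (supp f) (supp g)"
  have fin: "finite (supp f)" "finite (supp g)" "finite (supp h)" "finite ?D"
    using assms by (simp_all add: finite_supp_WCQbar finite_barprod_set)
  have "wmul (wmul f g) h c
      = (\<Sum>d\<in>?D. wmul f g d * (\<Sum>e\<in>supp h. h e * of_nat (count (barprod d e) c)))"
    by (simp add: wmul_eq_sum[OF fin(4) supp_wmul_subset fin(3) order_refl]
        sum_distrib_left mult.assoc)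
  also have "\<dots> = (\<Sum>a\<in>supp f. \<Sum>b\<in>supp g.
      f a * g b * (\<Sum>x\<in>#barprod a b. \<Sum>e\<in>supp h. h e * of_nat (count (barprod x e) c)))"
    by (simp only: wmul_eq_sum[OF fin(1) order_refl fin(2) order_refl]
        sum_sum_count_bilinear[OF fin(4) set_mset_barprod_subset])
  finally show ?thesis
    by (simp add: sum_mset_sum_swap count_mset_bind sum_mset_distrib_left sum_distrib_left
        image_mset.compositionality o_def mult.assoc)
qed

lemma wmul_wmul_right_eq:
  assumes "f \<in> WCQbar" "g \<in> WCQbar" "h \<in> WCQbar"
  shows "wmul f (wmul g h) c = (\<Sum>a\<in>supp f. \<Sum>b\<in>supp g. \<Sum>e\<in>supp h.
    f a * g b * h e * of_nat (count (mset_bind (barprod b e) (barprod a)) c))"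
proof -
  let ?E = "barprod_set (supp g) (supp h)"
  have fin: "finite (supp f)" "finite (supp g)" "finite (supp h)" "finite ?E"
    using assms by (simp_all add: finite_supp_WCQbar finite_barprod_set)
  have "wmul f (wmul g h) c
      = (\<Sum>a\<in>supp f. f a * (\<Sum>d\<in>?E. wmul g h d * of_nat (count (barprod a d) c)))"
    by (simp add: wmul_eq_sum[OF fin(1) order_refl fin(4) supp_wmul_subset]
        sum_distrib_left mult.assoc)
  also have "\<dots> = (\<Sum>a\<in>supp f. f a * (\<Sum>b\<in>supp g. \<Sum>e\<in>supp h.
      g b * h e * (\<Sum>x\<in>#barprod b e. of_nat (count (barprod a x) c))))"
    by (simp only: wmul_eq_sum[OF fin(2) order_refl fin(3) order_refl]
        sum_sum_count_bilinear[OF fin(4) set_mset_barprod_subset])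
  finally show ?thesis
    by (simp add: count_mset_bind sum_distrib_left image_mset.compositionality o_def mult.assoc)
qed

lemma wmul_assoc:
  "f \<in> WCQbar \<Longrightarrow> g \<in> WCQbar \<Longrightarrow> h \<in> WCQbar \<Longrightarrow> wmul (wmul f g) h = wmul f (wmul g h)"
  by (rule ext) (simp add: wmul_wmul_left_eq wmul_wmul_right_eq mset_bind_barprod_assoc)

lemma wmul_commute: "wmul f g = wmul g f"
  unfolding wmul_def by (rule ext, subst sum.swap) (simp add: barprod_commute ac_simps)

lemma wmul_wadd_right:
  assumes "f \<in> WCQbar" "g \<in> WCQbar" "h \<in> WCQbar"
  shows "wmul f (wadd g h) = wadd (wmul f g) (wmul f h)"
proof
  fix c
  have fin: "finite (supp f)" "finite (supp g \<union> supp h)"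
    using assms by (simp_all add: finite_supp_WCQbar)
  show "wmul f (wadd g h) c = wadd (wmul f g) (wmul f h) c"
    unfolding wmul_eq_sum[OF fin(1) order_refl fin(2) supp_wadd_subset]
      wmul_eq_sum[OF fin(1) order_refl fin(2) Un_upper1]
      wmul_eq_sum[OF fin(1) order_refl fin(2) Un_upper2]
    by (simp add: wadd_def sum.distrib[symmetric] algebra_simps)
qed

lemma wmul_wsmult_left:
  assumes "f \<in> WCQbar" "g \<in> WCQbar"
  shows "wmul (wsmult a f) g = wsmult a (wmul f g)"
proof
  fix c
  have fin: "finite (supp f)" "finite (supp g)"
    using assms by (simp_all add: finite_supp_WCQbar)
  show "wmul (wsmult a f) g c = wsmult a (wmul f g) c"
    unfolding wmul_eq_sum[OF fin(1) supp_wsmult_subset fin(2) order_refl]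
      wmul_eq_sum[OF fin(1) order_refl fin(2) order_refl]
    by (simp add: wsmult_def sum_distrib_left ac_simps)
qed

lemma wmul_wone_left:
  assumes "f \<in> WCQbar"
  shows "wmul wone f = f"
proof
  fix c
  have fin: "finite (supp f)"
    using assms by (simp add: finite_supp_WCQbar)
  have "wmul wone f c = (\<Sum>b\<in>supp f. f b * of_nat (count (barprod [Eps] b) c))"
    unfolding wone_def
    by (subst wmul_eq_sum[OF _ supp_Mb_subset fin order_refl]) (simp_all add: Mb_apply)
  also have "\<dots> = (\<Sum>b\<in>supp f. if b = c then f b else 0)"
    using assms by (intro sum.cong) (auto simp: barprod_Eps_left is_ne_comp_supp_WCQbar)
  also have "\<dots> = f c"
    using fin by (simp add: sum.delta' supp_def)
  finally show "wmul wone f c = f c" .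
qed

lemma Pbar_Nil: "finite (supp f) \<Longrightarrow> Pbar f [] = 0"
  by (simp add: Pbar_def Mb_def)

lemma Pbar_Cons: "finite (supp f) \<Longrightarrow> Pbar f (x # a) = (if x = Eps then f a else 0)"
  by (simp add: Pbar_def Mb_def sum.delta' supp_def if_distrib[of "(*) _"] cong: if_cong)

lemma supp_Pbar:
  assumes "finite (supp f)"
  shows "supp (Pbar f) = Cons Eps ` supp f"
proof (rule set_eqI)
  show "c \<in> supp (Pbar f) \<longleftrightarrow> c \<in> Cons Eps ` supp f" for c
    using assms by (cases c) (auto simp: supp_def Pbar_Nil Pbar_Cons)
qed

lemma Pbar_in_WCQbar: "f \<in> WCQbar \<Longrightarrow> Pbar f \<in> WCQbar"
  by (auto simp: WCQbar_def supp_Pbar is_ne_comp_def is_comp_def)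

lemma Pbar_wadd: "f \<in> WCQbar \<Longrightarrow> g \<in> WCQbar \<Longrightarrow> Pbar (wadd f g) = wadd (Pbar f) (Pbar g)"
proof
  fix c
  assume "f \<in> WCQbar" "g \<in> WCQbar"
  then show "Pbar (wadd f g) c = wadd (Pbar f) (Pbar g) c"
    using finite_supp_WCQbar[OF wadd_in_WCQbar, of f g]
    by (cases c) (simp_all add: Pbar_Nil Pbar_Cons finite_supp_WCQbar wadd_def)
qed

lemma Pbar_wsmult: "f \<in> WCQbar \<Longrightarrow> Pbar (wsmult a f) = wsmult a (Pbar f)"
proof
  fix c
  assume "f \<in> WCQbar"
  then show "Pbar (wsmult a f) c = wsmult a (Pbar f) c"
    using finite_supp_WCQbar[OF wsmult_in_WCQbar, of f a]
    by (cases c) (simp_all add: Pbar_Nil Pbar_Cons finite_supp_WCQbar wsmult_def)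
qed

lemma wmul_Pbar_eq:
  assumes "f \<in> WCQbar" "g \<in> WCQbar"
  shows "wmul (Pbar f) g c
      = (\<Sum>a\<in>supp f. \<Sum>b\<in>supp g. f a * g b * of_nat (count (barprod (Eps # a) b) c))"
    and "wmul f (Pbar g) c
      = (\<Sum>a\<in>supp f. \<Sum>b\<in>supp g. f a * g b * of_nat (count (barprod a (Eps # b)) c))"
    and "wmul (Pbar f) (Pbar g) c
      = (\<Sum>a\<in>supp f. \<Sum>b\<in>supp g. f a * g b * of_nat (count (barprod (Eps # a) (Eps # b)) c))"
  using finite_supp_WCQbar[OF assms(1)] finite_supp_WCQbar[OF assms(2)]
  by (simp_all add: wmul_def supp_Pbar sum.reindex Pbar_Cons)

lemma count_image_mset_Cons: "count (image_mset (Cons x) M) (x # c) = count M c"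
  by (induction M) auto

lemma Pbar_rota_baxter:
  assumes "f \<in> WCQbar" "g \<in> WCQbar"
  shows "wmul (Pbar f) (Pbar g)
    = wadd (wadd (Pbar (wmul f (Pbar g))) (Pbar (wmul (Pbar f) g))) (Pbar (wmul f g))"
proof
  fix c
  have fin: "finite (supp (wmul f (Pbar g)))" "finite (supp (wmul (Pbar f) g))"
    "finite (supp (wmul f g))" "finite (supp f)" "finite (supp g)"
    using assms by (simp_all add: finite_supp_WCQbar wmul_in_WCQbar Pbar_in_WCQbar)
  show "wmul (Pbar f) (Pbar g) c
    = wadd (wadd (Pbar (wmul f (Pbar g))) (Pbar (wmul (Pbar f) g))) (Pbar (wmul f g)) c"
  proof (cases "\<exists>c'. c = Eps # c'")
    case True
    then obtain c' where c: "c = Eps # c'"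
      by blast
    have "wmul (Pbar f) (Pbar g) c
        = (\<Sum>a\<in>supp f. \<Sum>b\<in>supp g. f a * g b * of_nat (count (qsh a b) c'))"
      by (simp add: wmul_Pbar_eq(3)[OF assms] c count_image_mset_Cons)
    also have "\<dots> = (\<Sum>a\<in>supp f. \<Sum>b\<in>supp g.
          f a * g b * of_nat (count (barprod a (Eps # b)) c')
        + f a * g b * of_nat (count (barprod (Eps # a) b) c')
        + f a * g b * of_nat (count (barprod a b) c'))"
      using assms
      by (intro sum.cong refl) (simp add: qsh_eq_barprod_Eps is_ne_comp_supp_WCQbar algebra_simps)
    also have "\<dots> = wmul f (Pbar g) c' + wmul (Pbar f) g c' + wmul f g c'"
      by (simp add: wmul_Pbar_eq[OF assms] wmul_eq_sum[OF fin(4) order_refl fin(5) order_refl]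
          sum.distrib)
    finally show ?thesis
      by (simp add: c wadd_def Pbar_Cons fin)
  next
    case False
    then have "count (image_mset (Cons Eps) M) c = 0" for M
      by (auto simp: count_eq_zero_iff)
    then have "wmul (Pbar f) (Pbar g) c = 0"
      by (simp add: wmul_Pbar_eq(3)[OF assms])
    with False show ?thesis
      by (cases c) (simp_all add: wadd_def Pbar_Nil Pbar_Cons fin)
  qed
qed

theorem WCQbar_comm_RB_algebra: "WCQbar_is_comm_RB_algebra TYPE('k::comm_ring_1)"
  unfolding WCQbar_is_comm_RB_algebra_def
  by (auto simp: wzero_in_WCQbar wone_in_WCQbar wadd_in_WCQbar wmul_in_WCQbar wsmult_in_WCQbar
      Pbar_in_WCQbar wmul_assoc wmul_wadd_right wmul_wone_left wmul_wsmult_left Pbar_wadd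
      Pbar_wsmult Pbar_rota_baxter intro: wmul_commute)

section \<open>Evaluation in a Rota--Baxter algebra\<close>

context
  fixes phi :: "'k::comm_ring_1 \<Rightarrow> 'r::comm_ring_1"
  assumes k_alg: "is_k_algebra phi"
begin

lemma is_k_algebra_add: "phi (a + b) = phi a + phi b"
  using k_alg by (simp add: is_k_algebra_def)

lemma is_k_algebra_mult: "phi (a * b) = phi a * phi b"
  using k_alg by (simp add: is_k_algebra_def)

lemma is_k_algebra_1: "phi 1 = 1"
  using k_alg by (simp add: is_k_algebra_def)

lemma is_k_algebra_0: "phi 0 = 0"
  using is_k_algebra_add[of 0 0] by simp

lemma is_k_algebra_of_nat: "phi (of_nat n) = of_nat n"
  by (induction n) (simp_all add: is_k_algebra_0 is_k_algebra_add is_k_algebra_1)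

lemma is_k_algebra_sum: "phi (sum F A) = (\<Sum>a\<in>A. phi (F a))"
  by (induction A rule: infinite_finite_induct) (simp_all add: is_k_algebra_0 is_k_algebra_add)

end

context
  fixes phi :: "'k::comm_ring_1 \<Rightarrow> 'r::comm_ring_1" and P :: "'r \<Rightarrow> 'r"
  assumes RB_op: "is_RB_operator phi P"
begin

lemma is_RB_operator_add: "P (x + y) = P x + P y"
  using RB_op by (simp add: is_RB_operator_def)

lemma is_RB_operator_scalar: "P (phi a * x) = phi a * P x"
  using RB_op by (simp add: is_RB_operator_def)

lemma is_RB_operator_identity: "P x * P y = P (x * P y) + P (P x * y) + P (x * y)"
  using RB_op by (simp add: is_RB_operator_def)

lemma is_RB_operator_0: "P 0 = 0"
  using is_RB_operator_add[of 0 0] by simp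

lemma is_RB_operator_sum: "P (sum F A) = (\<Sum>a\<in>A. P (F a))"
  by (induction A rule: infinite_finite_induct) (simp_all add: is_RB_operator_0 is_RB_operator_add)

lemma is_RB_operator_sum_mset: "P (\<Sum>x\<in>#M. F x) = (\<Sum>x\<in>#M. P (F x))"
  by (induction M) (simp_all add: is_RB_operator_0 is_RB_operator_add)

end

text \<open>\<open>x0^\<epsilon> = Mbar(\<epsilon>)\<close> is the unit of \<open>WCQbar\<close>, so it must be sent to \<open>1\<close>.\<close>

fun ntil_pow :: "'r::comm_ring_1 \<Rightarrow> ntil \<Rightarrow> 'r" where
  "ntil_pow r Eps = 1"
| "ntil_pow r (N n) = r ^ n"

lemma ntil_pow_nadd: "ntil_pow r (nadd x y) = ntil_pow r x * ntil_pow r y"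
  by (cases x; cases y) (auto simp: power_add)

fun rb_word :: "'r::comm_ring_1 \<Rightarrow> ('r \<Rightarrow> 'r) \<Rightarrow> ntil list \<Rightarrow> 'r" where
  "rb_word r P [] = 1"
| "rb_word r P (x # a) = P (ntil_pow r x * rb_word r P a)"

text \<open>The forced image of \<open>Mbar(a0, ..., ak) = x0^a0 * Pbar(Mbar(a1, ..., ak))\<close>, namely
  \<open>r^a0 * P(r^a1 * P(... * P(r^ak)))\<close>; the value at \<open>[]\<close> is junk.\<close>

fun rb_monomial :: "'r::comm_ring_1 \<Rightarrow> ('r \<Rightarrow> 'r) \<Rightarrow> ntil list \<Rightarrow> 'r" where
  "rb_monomial r P [] = 0"
| "rb_monomial r P (x # a) = ntil_pow r x * rb_word r P a"

definition rb_eval :: "('k::comm_ring_1 \<Rightarrow> 'r::comm_ring_1) \<Rightarrow> 'r \<Rightarrow> ('r \<Rightarrow> 'r)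
    \<Rightarrow> (ntil list \<Rightarrow> 'k) \<Rightarrow> 'r" where
  "rb_eval phi r P f = (\<Sum>c\<in>supp f. phi (f c) * rb_monomial r P c)"

lemma rb_word_qsh:
  assumes "is_RB_operator phi P"
  shows "(\<Sum>x\<in>#qsh a b. rb_word r P x) = rb_word r P a * rb_word r P b"
proof (induction a b rule: qsh.induct)
  case (3 x a y b)
  let ?u = "ntil_pow r x * rb_word r P a" and ?v = "ntil_pow r y * rb_word r P b"
  have "(\<Sum>z\<in>#qsh (x # a) (y # b). rb_word r P z)
      = P (ntil_pow r x * (\<Sum>z\<in>#qsh a (y # b). rb_word r P z))
      + P (ntil_pow r y * (\<Sum>z\<in>#qsh (x # a) b. rb_word r P z))
      + P (ntil_pow r (nadd x y) * (\<Sum>z\<in>#qsh a b. rb_word r P z))"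
    by (simp add: image_mset.compositionality o_def is_RB_operator_sum_mset[OF assms]
        sum_mset_distrib_left)
  also have "\<dots> = P (?u * P ?v) + P (P ?u * ?v) + P (?u * ?v)"
    using 3 by (simp add: ntil_pow_nadd ac_simps)
  also have "\<dots> = rb_word r P (x # a) * rb_word r P (y # b)"
    by (simp add: is_RB_operator_identity[OF assms])
  finally show ?case .
qed simp_all

lemma rb_monomial_barprod:
  assumes "is_RB_operator phi P" "a \<noteq> []" "b \<noteq> []"
  shows "(\<Sum>x\<in>#barprod a b. rb_monomial r P x) = rb_monomial r P a * rb_monomial r P b"
  using assms(2,3)
  by (cases a; cases b)
    (auto simp: image_mset.compositionality o_def sum_mset_distrib_left[symmetric]
      rb_word_qsh[OF assms(1)] ntil_pow_nadd ac_simps)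

context
  fixes phi :: "'k::comm_ring_1 \<Rightarrow> 'r::comm_ring_1" and P :: "'r \<Rightarrow> 'r" and r :: 'r
  assumes k_alg: "is_k_algebra phi" and RB_op: "is_RB_operator phi P"
begin

lemma rb_eval_eq_sum:
  "finite S \<Longrightarrow> supp f \<subseteq> S \<Longrightarrow> rb_eval phi r P f = (\<Sum>c\<in>S. phi (f c) * rb_monomial r P c)"
  unfolding rb_eval_def by (rule sum_supp_superset) (auto simp: is_k_algebra_0[OF k_alg])

lemma rb_eval_Mb: "rb_eval phi r P (Mb c) = rb_monomial r P c"
  by (subst rb_eval_eq_sum[OF _ supp_Mb_subset]) (simp_all add: Mb_def is_k_algebra_1[OF k_alg])

lemma rb_eval_wadd:
  assumes "f \<in> WCQbar" "g \<in> WCQbar"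
  shows "rb_eval phi r P (wadd f g) = rb_eval phi r P f + rb_eval phi r P g"
proof -
  have fin: "finite (supp f \<union> supp g)"
    using assms by (simp add: finite_supp_WCQbar)
  show ?thesis
    unfolding rb_eval_eq_sum[OF fin supp_wadd_subset] rb_eval_eq_sum[OF fin Un_upper1]
      rb_eval_eq_sum[OF fin Un_upper2]
    by (simp add: wadd_def is_k_algebra_add[OF k_alg] sum.distrib distrib_right)
qed

lemma rb_eval_wsmult:
  assumes "f \<in> WCQbar"
  shows "rb_eval phi r P (wsmult a f) = phi a * rb_eval phi r P f"
  unfolding rb_eval_eq_sum[OF finite_supp_WCQbar[OF assms] supp_wsmult_subset]
    rb_eval_eq_sum[OF finite_supp_WCQbar[OF assms] order_refl]
  by (simp add: wsmult_def is_k_algebra_mult[OF k_alg] sum_distrib_left ac_simps)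

lemma rb_eval_wmul:
  assumes "f \<in> WCQbar" "g \<in> WCQbar"
  shows "rb_eval phi r P (wmul f g) = rb_eval phi r P f * rb_eval phi r P g"
proof -
  let ?D = "barprod_set (supp f) (supp g)"
  have fin: "finite (supp f)" "finite (supp g)" "finite ?D"
    using assms by (simp_all add: finite_supp_WCQbar finite_barprod_set)
  have "rb_eval phi r P (wmul f g) = (\<Sum>d\<in>?D. phi (wmul f g d) * rb_monomial r P d)"
    by (rule rb_eval_eq_sum[OF fin(3) supp_wmul_subset])
  also have "\<dots> = (\<Sum>d\<in>?D. (\<Sum>a\<in>supp f. \<Sum>b\<in>supp g.
      phi (f a) * phi (g b) * of_nat (count (barprod a b) d)) * rb_monomial r P d)"
    by (simp add: wmul_eq_sum[OF fin(1) order_refl fin(2) order_refl] is_k_algebra_sum[OF k_alg]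
        is_k_algebra_mult[OF k_alg] is_k_algebra_of_nat[OF k_alg])
  also have "\<dots> = (\<Sum>a\<in>supp f. \<Sum>b\<in>supp g.
      phi (f a) * phi (g b) * (\<Sum>x\<in>#barprod a b. rb_monomial r P x))"
    by (rule sum_sum_count_bilinear[OF fin(3) set_mset_barprod_subset])
  also have "\<dots> = (\<Sum>a\<in>supp f. \<Sum>b\<in>supp g.
      phi (f a) * rb_monomial r P a * (phi (g b) * rb_monomial r P b))"
  proof (intro sum.cong refl)
    fix a b
    assume "a \<in> supp f" "b \<in> supp g"
    with assms have "a \<noteq> []" "b \<noteq> []"
      by (auto dest: is_ne_comp_supp_WCQbar simp: is_ne_comp_def)
    then show "phi (f a) * phi (g b) * (\<Sum>x\<in>#barprod a b. rb_monomial r P x)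
        = phi (f a) * rb_monomial r P a * (phi (g b) * rb_monomial r P b)"
      by (simp add: rb_monomial_barprod[OF RB_op] ac_simps)
  qed
  also have "\<dots> = rb_eval phi r P f * rb_eval phi r P g"
    by (simp add: rb_eval_def sum_product)
  finally show ?thesis .
qed

lemma rb_eval_Pbar:
  assumes "f \<in> WCQbar"
  shows "rb_eval phi r P (Pbar f) = P (rb_eval phi r P f)"
proof -
  have fin: "finite (supp f)"
    using assms by (rule finite_supp_WCQbar)
  have "rb_eval phi r P (Pbar f) = (\<Sum>a\<in>supp f. phi (f a) * P (rb_monomial r P a))"
    using assms
    by (auto simp: rb_eval_def supp_Pbar[OF fin] sum.reindex Pbar_Cons[OF fin]
        is_ne_comp_def neq_Nil_conv dest!: is_ne_comp_supp_WCQbar intro!: sum.cong)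
  also have "\<dots> = P (rb_eval phi r P f)"
    by (simp add: rb_eval_def is_RB_operator_sum[OF RB_op] is_RB_operator_scalar[OF RB_op])
  finally show ?thesis .
qed

lemma rb_eval_is_RB_hom: "is_RB_hom phi P (rb_eval phi r P)"
  unfolding is_RB_hom_def
  by (simp add: wone_def rb_eval_Mb rb_eval_wadd rb_eval_wmul rb_eval_wsmult rb_eval_Pbar)

end

section \<open>Uniqueness\<close>

lemma WCQbar_induct [consumes 1, case_names zero add]:
  fixes f :: "ntil list \<Rightarrow> 'k::comm_ring_1"
  assumes "f \<in> WCQbar"
    and zero: "Q wzero"
    and add: "\<And>c a g. is_ne_comp c \<Longrightarrow> g \<in> WCQbar \<Longrightarrow> Q g \<Longrightarrow> Q (wadd (wsmult a (Mb c)) g)"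
  shows "Q f"
proof -
  have "\<forall>f :: ntil list \<Rightarrow> 'k \<in> WCQbar. supp f \<subseteq> S \<longrightarrow> Q f" if "finite S" for S
    using that
  proof (induction S rule: finite_induct)
    case empty
    have "f = wzero" if "supp f = {}" for f :: "ntil list \<Rightarrow> 'k"
      using that by (auto simp: supp_def wzero_def)
    with zero show ?case
      by auto
  next
    case (insert c S)
    show ?case
    proof (intro ballI impI)
      fix f :: "ntil list \<Rightarrow> 'k"
      assume f: "f \<in> WCQbar" and supp_f: "supp f \<subseteq> insert c S"
      let ?g = "f(c := 0)"
      have "supp ?g \<subseteq> supp f" "supp ?g \<subseteq> S"
        using supp_f by (auto simp: supp_def)
      then have g: "?g \<in> WCQbar" "supp ?g \<subseteq> S"
        using WCQbar_supp_subset[OF f] by blast+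
      with insert.IH have "Q ?g"
        by blast
      show "Q f"
      proof (cases "f c = 0")
        case True
        with \<open>Q ?g\<close> show ?thesis
          by (simp add: fun_upd_idem)
      next
        case False
        then have "f = wadd (wsmult (f c) (Mb c)) ?g"
          by (auto simp: wadd_def wsmult_def Mb_def)
        moreover have "is_ne_comp c"
          using f False by (simp add: WCQbar_iff)
        ultimately show ?thesis
          using add g \<open>Q ?g\<close> by metis
      qed
    qed
  qed
  with assms(1) show ?thesis
    by (blast dest: finite_supp_WCQbar)
qed

lemma wmul_Mb_single: "wmul (Mb [x]) (Mb [y]) = Mb [nadd x y]"
  by (rule ext, subst wmul_eq_sum[OF _ supp_Mb_subset _ supp_Mb_subset]) (auto simp: Mb_def)

lemma Pbar_Mb: "Pbar (Mb c) = Mb (Eps # c)"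
proof
  show "Pbar (Mb c) d = Mb (Eps # c) d" for d
    by (cases d) (simp_all add: Pbar_Nil Pbar_Cons Mb_apply finite_supp_Mb)
qed

lemma Mb_Cons_eq_wmul_Pbar: "x \<noteq> N 0 \<Longrightarrow> Mb (x # c) = wmul (Mb [x]) (Pbar (Mb c))"
  unfolding Pbar_Mb
  by (rule ext, subst wmul_eq_sum[OF _ supp_Mb_subset _ supp_Mb_subset])
    (auto simp: Mb_def nadd_Eps_right)

lemma Mb_N_Suc: "Mb [N (Suc (Suc m))] = wmul x0 (Mb [N (Suc m)])"
  by (simp add: x0_def wmul_Mb_single)

context
  fixes phi :: "'k::comm_ring_1 \<Rightarrow> 'r::comm_ring_1" and P :: "'r \<Rightarrow> 'r"
    and h :: "(ntil list \<Rightarrow> 'k) \<Rightarrow> 'r"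
  assumes hom: "is_RB_hom phi P h"
begin

lemma is_RB_hom_wone: "h wone = 1"
  and is_RB_hom_wadd: "f \<in> WCQbar \<Longrightarrow> g \<in> WCQbar \<Longrightarrow> h (wadd f g) = h f + h g"
  and is_RB_hom_wmul: "f \<in> WCQbar \<Longrightarrow> g \<in> WCQbar \<Longrightarrow> h (wmul f g) = h f * h g"
  and is_RB_hom_wsmult: "f \<in> WCQbar \<Longrightarrow> h (wsmult a f) = phi a * h f"
  and is_RB_hom_Pbar: "f \<in> WCQbar \<Longrightarrow> h (Pbar f) = P (h f)"
  using hom by (simp_all add: is_RB_hom_def)

lemma is_RB_hom_wzero: "h wzero = 0"
proof -
  have "h wzero = h (wadd wzero wzero)"
    by (simp add: wadd_def wzero_def)
  also have "\<dots> = h wzero + h wzero"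
    by (simp only: is_RB_hom_wadd wzero_in_WCQbar)
  finally show ?thesis
    by simp
qed

lemma is_RB_hom_Mb_single: "x \<noteq> N 0 \<Longrightarrow> h (Mb [x]) = ntil_pow (h x0) x"
proof (cases x)
  case Eps
  then show ?thesis
    using is_RB_hom_wone by (simp add: wone_def)
next
  case (N n)
  moreover assume "x \<noteq> N 0"
  ultimately obtain m where x: "x = N (Suc m)"
    by (cases n) auto
  have "h (Mb [N (Suc m)]) = h x0 ^ Suc m"
  proof (induction m)
    case (Suc m)
    then show ?case
      using is_RB_hom_wmul[OF Mb_single_in_WCQbar[of "N 1"] Mb_single_in_WCQbar[of "N (Suc m)"]]
      by (simp add: Mb_N_Suc x0_def)
  qed (simp add: x0_def)
  with x show ?thesis
    by simp
qed

lemma is_RB_hom_Mb: "is_ne_comp c \<Longrightarrow> h (Mb c) = rb_monomial (h x0) P c"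
proof (induction c rule: induct_list012)
  case (2 x)
  then show ?case
    by (simp add: is_RB_hom_Mb_single is_ne_comp_def is_comp_def)
next
  case (3 x y c)
  then have x: "x \<noteq> N 0" and yc: "is_ne_comp (y # c)"
    by (auto simp: is_ne_comp_def is_comp_def)
  have "h (Mb (x # y # c)) = h (wmul (Mb [x]) (Pbar (Mb (y # c))))"
    by (rule arg_cong[where f = h], rule Mb_Cons_eq_wmul_Pbar[OF x])
  also have "\<dots> = h (Mb [x]) * P (h (Mb (y # c)))"
    using is_RB_hom_wmul[OF Mb_single_in_WCQbar[OF x] Pbar_in_WCQbar[OF Mb_in_WCQbar[OF yc]]]
      is_RB_hom_Pbar[OF Mb_in_WCQbar[OF yc]]
    by simp
  finally show ?case
    using 3 x yc by (simp add: is_RB_hom_Mb_single)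
qed (simp add: is_ne_comp_def)

end

lemma is_RB_hom_unique:
  assumes "is_RB_hom phi P h" "is_RB_hom phi P h'" "h x0 = h' x0" "f \<in> WCQbar"
  shows "h f = h' f"
  using assms(4)
proof (induction rule: WCQbar_induct)
  case zero
  show ?case
    using assms(1,2) by (simp add: is_RB_hom_wzero)
next
  case (add c a g)
  then show ?case
    using assms(1-3)
    by (simp add: Mb_in_WCQbar wsmult_in_WCQbar is_RB_hom_wadd is_RB_hom_wsmult is_RB_hom_Mb)
qed

theorem theorem4p4:
  fixes phi :: "'k::comm_ring_1 \<Rightarrow> 'r::comm_ring_1"
    and P :: "'r \<Rightarrow> 'r" and r :: 'r
  assumes kQ: "\<forall>n::nat. n \<noteq> 0 \<longrightarrow> (\<exists>y::'k. of_nat n * y = 1)"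
  shows "WCQbar_is_comm_RB_algebra TYPE('k)
    \<and> ((is_k_algebra phi \<and> is_RB_operator phi P) \<longrightarrow>
        (\<exists>h. is_RB_hom phi P h \<and> h x0 = r \<and>
           (\<forall>h'. is_RB_hom phi P h' \<and> h' x0 = r \<longrightarrow> (\<forall>f\<in>WCQbar. h' f = h f))))"
proof (intro conjI impI)
  show "WCQbar_is_comm_RB_algebra TYPE('k)"
    by (rule WCQbar_comm_RB_algebra)
next
  assume "is_k_algebra phi \<and> is_RB_operator phi P"
  then have "is_RB_hom phi P (rb_eval phi r P)" "rb_eval phi r P x0 = r"
    by (simp_all add: rb_eval_is_RB_hom x0_def rb_eval_Mb)
  then show "\<exists>h. is_RB_hom phi P h \<and> h x0 = r \<and>
      (\<forall>h'. is_RB_hom phi P h' \<and> h' x0 = r \<longrightarrow> (\<forall>f\<in>WCQbar. h' f = h f))"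
    using is_RB_hom_unique by metis
qed

end
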